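(* Let $U$ be a closed convex set in $D$. Then: (1) $\psi_U$ is an orientation-preserving homeomorphism of $S^1$; (2) if $V$ is a closed convex set in $D$ with $V\subset U$, then $\rho(\psi_U)\leq\rho(\psi_V)$; (3) $\rho(\psi_U)\leq\frac12$.
   Context: $D$ is the open unit disk in $\mathbb R^2$, $S^1$ its boundary circle identified with $\mathbb R/\mathbb Z$ via the counterclockwise normalized angle. For a closed convex $U\subset D$ and $v\in S^1$, $\psi_U(v)$ is the point $w\in S^1\setminus\{v\}$ such that the line $vw$ meets $U$ and $U$ lies in the closed half-plane to the left of the directed line from $v$ to $w$ (the first point counterclockwise from $v$ whose chord from $v$ is tangent to $U$). For an orientation-preserving homeomorphism $f$ of $S^1$, $\rho(f)=\lim_{n\to\infty}(\overline f^n(x)-x)/n$ with $\overline f$ the lift to $\mathbb R$ satisfying $\overline f(0)\in[0,1)$. *)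

theory Defs
  imports "HOL-Analysis.Analysis"
begin

text \<open>The plane is modelled by the complex numbers; D = ball 0 1, S^1 = sphere 0 1,
  identified with R/Z via the normalized angle t |-> circ t.\<close>

definition circ :: "real \<Rightarrow> complex" where
  "circ t = cis (2 * pi * t)"

definition left_of :: "complex \<Rightarrow> complex \<Rightarrow> complex \<Rightarrow> bool" where
  "left_of v w p \<longleftrightarrow> Im (cnj (w - v) * (p - v)) \<ge> 0"

definition line_through :: "complex \<Rightarrow> complex \<Rightarrow> complex set" where
  "line_through v w = {v + of_real t * (w - v) | t. True}"

definition psi :: "complex set \<Rightarrow> complex \<Rightarrow> complex" where
  "psi U v = (THE w. w \<in> sphere 0 1 \<and> w \<noteq> v \<and> line_through v w \<inter> U \<noteq> {}
                    \<and> (\<forall>p\<in>U. left_of v w p))"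

definition orient_pres_homeo :: "(complex \<Rightarrow> complex) \<Rightarrow> bool" where
  "orient_pres_homeo f \<longleftrightarrow>
     (\<exists>g. homeomorphism (sphere 0 1) (sphere 0 1) f g) \<and>
     (\<exists>F::real \<Rightarrow> real. continuous_on UNIV F \<and> strict_mono F \<and>
        (\<forall>t. F (t + 1) = F t + 1) \<and> (\<forall>t. f (circ t) = circ (F t)))"

definition lift_of :: "(complex \<Rightarrow> complex) \<Rightarrow> real \<Rightarrow> real" where
  "lift_of f = (THE F. continuous_on UNIV F \<and> (\<forall>t. f (circ t) = circ (F t))
                        \<and> 0 \<le> F 0 \<and> F 0 < 1)"

definition rot_num :: "(complex \<Rightarrow> complex) \<Rightarrow> real" where
  "rot_num f = lim (\<lambda>n. (((lift_of f) ^^ n) 0 - 0) / real n)"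

end

theory Submission
  imports Defs "HOL-Library.Real_Mod"
begin

(* For a point p of the disk, sending v to the other endpoint of the chord through v and p is an
  involution of the circle, whose lift chord_lift p satisfies chord_lift p (chord_lift p t) = t + 1.
  The chord from v that is tangent to U with U on its left is the first chord, counterclockwise
  from v, that meets U; so the lift of psi U is the pointwise minimum of the lifts chord_lift p over
  p in U, and this minimum is attained. Hence the lift is continuous, strictly increasing and of
  degree one, which makes psi U an orientation-preserving homeomorphism. It decreases as U grows,
  so the rotation number is antitone in U; and being below chord_lift p, its second iterate is at
  most t + 1, which bounds the rotation number by 1/2. *)

section \<open>Infima over a compact parameter set\<close>

lemma cInf_image_le_plus:
  fixes g h :: "'a \<Rightarrow> real"
  assumes "K \<noteq> {}" "bdd_below (g ` K)" "\<And>y. y \<in> K \<Longrightarrow> g y \<le> h y + c"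
  shows "Inf (g ` K) \<le> Inf (h ` K) + c"
proof -
  have "Inf (g ` K) - c \<le> Inf (h ` K)"
  proof (rule cInf_greatest)
    fix v assume "v \<in> h ` K"
    then obtain y where "y \<in> K" "v = h y" by blast
    then show "Inf (g ` K) - c \<le> v"
      using cInf_lower[OF imageI assms(2), of y] assms(3)[of y] by simp
  qed (use assms(1) in simp)
  then show ?thesis by simp
qed

lemma continuous_on_Inf_compact:
  fixes f :: "'a::metric_space \<Rightarrow> 'b::metric_space \<Rightarrow> real"
  assumes "compact S" "compact K" "K \<noteq> {}"
    and cont: "continuous_on (S \<times> K) (\<lambda>x. f (fst x) (snd x))"
  shows "continuous_on S (\<lambda>x. Inf (f x ` K))"
proof -
  have bdd: "bdd_below (f x ` K)" if "x \<in> S" for x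
  proof -
    have "compact ((\<lambda>x. f (fst x) (snd x)) ` ({x} \<times> K))"
      using that by (intro compact_continuous_image continuous_on_subset[OF cont] compact_Times
          \<open>compact K\<close>) auto
    moreover have "(\<lambda>x. f (fst x) (snd x)) ` ({x} \<times> K) = f x ` K" by force
    ultimately show ?thesis by (metis bounded_imp_bdd_below compact_imp_bounded)
  qed
  have uc: "uniformly_continuous_on (S \<times> K) (\<lambda>x. f (fst x) (snd x))"
    using assms by (intro compact_uniformly_continuous compact_Times)
  show ?thesis unfolding continuous_on_iff
  proof (intro ballI allI impI)
    fix x0 and e :: real assume "x0 \<in> S" "0 < e"
    obtain d where "d > 0" and d: "\<forall>a\<in>S \<times> K. \<forall>b\<in>S \<times> K. dist b a < d \<longrightarrow>
        dist (f (fst b) (snd b)) (f (fst a) (snd a)) < e/2"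
      using uc \<open>0 < e\<close> unfolding uniformly_continuous_on_def by (meson half_gt_zero)
    show "\<exists>d>0. \<forall>x\<in>S. dist x x0 < d \<longrightarrow> dist (Inf (f x ` K)) (Inf (f x0 ` K)) < e"
    proof (intro exI[of _ d] conjI ballI impI)
      show "d > 0" by fact
    next
      fix x assume "x \<in> S" "dist x x0 < d"
      have close: "f x y \<le> f x0 y + e/2" "f x0 y \<le> f x y + e/2" if "y \<in> K" for y
      proof -
        have "dist (f x y) (f x0 y) < e/2"
          using d \<open>x \<in> S\<close> \<open>x0 \<in> S\<close> that \<open>dist x x0 < d\<close> by (auto simp: dist_Pair_Pair)
        then show "f x y \<le> f x0 y + e/2" "f x0 y \<le> f x y + e/2"
          unfolding dist_real_def by arith+
      qed
      have "Inf (f x ` K) \<le> Inf (f x0 ` K) + e/2"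
        using close(1) by (intro cInf_image_le_plus \<open>K \<noteq> {}\<close> bdd \<open>x \<in> S\<close>)
      moreover have "Inf (f x0 ` K) \<le> Inf (f x ` K) + e/2"
        using close(2) by (intro cInf_image_le_plus \<open>K \<noteq> {}\<close> bdd \<open>x0 \<in> S\<close>)
      ultimately show "dist (Inf (f x ` K)) (Inf (f x0 ` K)) < e"
        using \<open>0 < e\<close> by (simp add: dist_real_def abs_le_iff)
    qed
  qed
qed

section \<open>The unit circle and lifts of circle maps\<close>

lemma circ_add: "circ (a + b) = circ a * circ b"
  by (simp add: circ_def cis_mult distrib_left)

lemma norm_circ [simp]: "norm (circ t) = 1"
  by (simp add: circ_def)

lemma circ_eq_1_iff: "circ t = 1 \<longleftrightarrow> t \<in> \<int>"
  by (auto simp: circ_def cis_eq_1_iff Ints_def)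

lemma circ_eq_iff: "circ a = circ b \<longleftrightarrow> a - b \<in> \<int>"
proof -
  have "circ a = circ (a - b) * circ b"
    by (simp flip: circ_add)
  moreover have "circ b \<noteq> 0"
    using norm_circ[of b] by (auto simp del: norm_circ)
  ultimately show ?thesis
    by (metis circ_eq_1_iff mult_cancel_right1)
qed

lemma circ_plus_1 [simp]: "circ (t + 1) = circ t"
  by (simp add: circ_eq_iff)

lemma continuous_circ [continuous_intros]: "continuous_on S circ"
  unfolding circ_def cis_conv_exp by (intro continuous_intros)

lemma sphere_eq_circ_image: "sphere 0 1 = circ ` {0..<1}"
proof (intro equalityI subsetI)
  fix u :: complex assume "u \<in> sphere 0 1"
  then have "u = circ (Arg2pi u / (2 * pi))"
    using complex_norm_eq_1_exp[of u] by (simp add: circ_def cis_conv_exp)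
  moreover have "Arg2pi u / (2 * pi) \<in> {0..<1}"
    using Arg2pi_ge_0[of u] Arg2pi_lt_2pi[of u] by (simp add: field_simps)
  ultimately show "u \<in> circ ` {0..<1}" by blast
qed auto

lemma circ_ne_1: "0 < \<theta> \<Longrightarrow> \<theta> < 1 \<Longrightarrow> circ \<theta> \<noteq> 1"
  by (auto simp: circ_eq_1_iff elim!: Ints_cases)

lemma sphere_eq_rotate_circ:
  assumes "norm z = 1" "norm w = 1"
  obtains \<theta> where "0 \<le> \<theta>" "\<theta> < 1" "w = z * circ \<theta>"
proof -
  have "cnj z * w \<in> sphere 0 1" using assms by (simp add: norm_mult)
  then obtain \<theta> where "\<theta> \<in> {0..<1}" "cnj z * w = circ \<theta>"
    unfolding sphere_eq_circ_image by blast
  moreover have "z * (cnj z * w) = w"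
    using assms(1) complex_norm_square[of z] by (simp add: mult.assoc [symmetric])
  ultimately show thesis using that by auto
qed

lemma continuous_on_sphere_from_circ:
  assumes "continuous_on UNIV (f \<circ> circ)"
  shows "continuous_on (sphere 0 1) f"
proof -
  have quotient: "quotient_map (top_of_set {0..1}) (top_of_set (sphere 0 1)) circ"
  proof (rule continuous_imp_quotient_map)
    show "circ ` topspace (top_of_set {0..1}) = topspace (top_of_set (sphere 0 1))"
      using sphere_eq_circ_image by (force simp: image_iff)
  next
    show "compact_space (top_of_set {0..1::real})"
      by (simp add: compact_space_subtopology)
    show "Hausdorff_space (top_of_set (sphere (0::complex) 1))"
      by (simp add: Hausdorff_space_subtopology)
  qed (simp add: continuous_circ)
  moreover have "continuous_map (top_of_set {0..1}) euclidean (f \<circ> circ)"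
    using continuous_on_subset[OF assms subset_UNIV] by (simp only: continuous_map_iff_continuous)
  ultimately have "continuous_map (top_of_set (sphere 0 1)) euclidean f"
    by (rule continuous_compose_quotient_map)
  then show ?thesis
    by (simp only: continuous_map_iff_continuous)
qed

lemma circ_lift_unique:
  fixes F G :: "real \<Rightarrow> real"
  assumes "continuous_on UNIV F" "continuous_on UNIV G"
    and "\<And>t. circ (F t) = circ (G t)" and "\<bar>F 0 - G 0\<bar> < 1"
  shows "F = G"
proof -
  have Ints: "F t - G t \<in> \<int>" for t
    using assms(3) by (simp add: circ_eq_iff)
  have "(\<lambda>t. F t - G t) constant_on UNIV"
  proof (rule continuous_discrete_range_constant)
    show "continuous_on UNIV (\<lambda>t. F t - G t)"
      using assms(1,2) by (intro continuous_intros)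
    fix x :: real
    have "1 \<le> norm ((F y - G y) - (F x - G x))" if "F y - G y \<noteq> F x - G x" for y
      using that Ints[of x] Ints[of y] by (simp add: Ints_nonzero_abs_ge1)
    then show "\<exists>e>0. \<forall>y. y \<in> UNIV \<and> F y - G y \<noteq> F x - G x \<longrightarrow> e \<le> norm (F y - G y - (F x - G x))"
      by (intro exI[of _ 1]) auto
  qed simp
  then have "F t - G t = F 0 - G 0" for t
    by (simp add: constant_on_def) metis
  moreover have "F 0 - G 0 = 0"
    using Ints[of 0] assms(4) by (metis Ints_nonzero_abs_ge1 linorder_not_less)
  ultimately show ?thesis by fastforce
qed

lemma lift_of_eqI:
  assumes "continuous_on UNIV F" "\<And>t. f (circ t) = circ (F t)" "0 \<le> F 0" "F 0 < 1"
  shows "lift_of f = F"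
  unfolding lift_of_def
proof (rule the_equality)
  fix G assume G: "continuous_on UNIV G \<and> (\<forall>t. f (circ t) = circ (G t)) \<and> 0 \<le> G 0 \<and> G 0 < 1"
  show "G = F"
    using G assms by (intro circ_lift_unique) auto
qed (use assms in auto)

lemma orient_pres_homeoI:
  assumes cont: "continuous_on UNIV F" and mono: "strict_mono F"
    and plus_1: "\<And>t. F (t + 1) = F t + 1" and lift: "\<And>t. f (circ t) = circ (F t)"
  shows "orient_pres_homeo f"
proof -
  have "continuous_on UNIV (f \<circ> circ)"
    using continuous_on_compose[OF cont continuous_circ] by (simp add: comp_def lift)
  then have "continuous_on (sphere 0 1) f"
    by (rule continuous_on_sphere_from_circ)
  moreover have "f ` sphere 0 1 = sphere 0 1"
  proof
    show "f ` sphere 0 1 \<subseteq> sphere 0 1"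
    proof
      fix w assume "w \<in> f ` sphere 0 1"
      then obtain a where "w = f (circ a)" by (auto simp: sphere_eq_circ_image)
      then show "w \<in> sphere 0 1" by (simp add: lift)
    qed
    show "sphere 0 1 \<subseteq> f ` sphere 0 1"
    proof
      fix w :: complex assume "w \<in> sphere 0 1"
      then obtain s where "w = circ s" by (auto simp: sphere_eq_circ_image)
      define s' where "s' = s + of_int \<lceil>F 0 - s\<rceil>"
      have "circ s' = w" unfolding s'_def \<open>w = circ s\<close> by (simp add: circ_eq_iff)
      have "F 1 = F 0 + 1" using plus_1[of 0] by simp
      then have "F 0 \<le> s'" "s' \<le> F 1"
        using ceiling_correct[of "F 0 - s"] unfolding s'_def by linarith+
      then obtain x where "F x = s'"
        using IVT'[of F 0 s' 1] continuous_on_subset[OF cont] by auto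
      then show "w \<in> f ` sphere 0 1"
        using \<open>circ s' = w\<close> lift[of x] by (metis image_eqI mem_sphere_0 norm_circ)
    qed
  qed
  moreover have "inj_on f (sphere 0 1)"
  proof (rule inj_onI)
    fix u v :: complex assume "u \<in> sphere 0 1" "v \<in> sphere 0 1" "f u = f v"
    then obtain a b where ab: "a \<in> {0..<1}" "b \<in> {0..<1}" "u = circ a" "v = circ b"
      by (auto simp: sphere_eq_circ_image)
    then have "F a - F b \<in> \<int>" using \<open>f u = f v\<close> by (simp add: lift circ_eq_iff)
    moreover have "F 0 \<le> F a" "F a < F 1" "F 0 \<le> F b" "F b < F 1"
      using ab mono by (auto simp: strict_mono_less_eq strict_mono_less)
    ultimately have "F a = F b"
      using plus_1[of 0] Ints_nonzero_abs_ge1[of "F a - F b"] by fastforce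
    then show "u = v" using ab mono by (simp add: strict_mono_eq)
  qed
  ultimately obtain g where "homeomorphism (sphere 0 1) (sphere 0 1) f g"
    using homeomorphism_compact[OF compact_sphere] by metis
  then show ?thesis
    unfolding orient_pres_homeo_def using assms by blast
qed

section \<open>Translation numbers\<close>

definition translation_number :: "(real \<Rightarrow> real) \<Rightarrow> real" where
  "translation_number F = lim (\<lambda>n. (F ^^ n) 0 / real n)"

lemma rot_num_eq_translation_number: "rot_num f = translation_number (lift_of f)"
  by (simp add: rot_num_def translation_number_def)

locale degree_one_lift =
  fixes F :: "real \<Rightarrow> real"
  assumes mono_lift: "mono F" and lift_plus_1: "\<And>t. F (t + 1) = F t + 1"
begin

lemma funpow_plus_1: "(F ^^ n) (x + 1) = (F ^^ n) x + 1"
  by (induction n) (simp_all add: lift_plus_1)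

lemma funpow_plus_int: "(F ^^ n) (x + of_int k) = (F ^^ n) x + of_int k"
proof (induction k rule: int_induct[where k = 0])
  case (step1 k)
  then show ?case using funpow_plus_1[of n "x + of_int k"] by (simp add: add.assoc)
next
  case (step2 k)
  then show ?case using funpow_plus_1[of n "x + of_int (k - 1)"] by (simp add: algebra_simps)
qed simp

lemma funpow_displacement: "\<bar>(F ^^ n) x - x - (F ^^ n) 0\<bar> \<le> 1"
proof -
  define y where "y = x - of_int \<lfloor>x\<rfloor>"
  have y: "0 \<le> y" "y < 1" unfolding y_def by linarith+
  have "(F ^^ n) x = (F ^^ n) y + of_int \<lfloor>x\<rfloor>"
    using funpow_plus_int[of n y "\<lfloor>x\<rfloor>"] by (simp add: y_def)
  moreover have "(F ^^ n) 0 \<le> (F ^^ n) y" "(F ^^ n) y \<le> (F ^^ n) 1"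
    using y by (simp_all add: funpow_mono mono_lift)
  moreover have "(F ^^ n) 1 = (F ^^ n) 0 + 1"
    using funpow_plus_1[of n 0] by simp
  ultimately show ?thesis unfolding y_def by linarith
qed

lemma funpow_mult_bound: "\<bar>(F ^^ (k * n)) 0 - real k * (F ^^ n) 0\<bar> \<le> real k"
proof (induction k)
  case (Suc k)
  have "(F ^^ (Suc k * n)) 0 = (F ^^ n) ((F ^^ (k * n)) 0)"
    by (simp add: funpow_add)
  then show ?case
    using Suc funpow_displacement[of n "(F ^^ (k * n)) 0"] by (simp add: algebra_simps)
qed simp

lemma translation_quotients_close:
  assumes "m \<ge> 1" "n \<ge> 1"
  shows "\<bar>(F ^^ m) 0 / real m - (F ^^ n) 0 / real n\<bar> \<le> 1 / real m + 1 / real n"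
proof -
  have close: "\<bar>(F ^^ (k * n)) 0 / (real k * real n) - (F ^^ n) 0 / real n\<bar> \<le> 1 / real n"
    if "k \<ge> 1" "n \<ge> 1" for k n
  proof -
    have "\<bar>(F ^^ (k * n)) 0 / (real k * real n) - (F ^^ n) 0 / real n\<bar> =
        \<bar>(F ^^ (k * n)) 0 - real k * (F ^^ n) 0\<bar> / (real k * real n)"
      using that by (simp add: field_simps)
    also have "\<dots> \<le> real k / (real k * real n)"
      by (intro divide_right_mono funpow_mult_bound) simp
    finally show ?thesis using that by simp
  qed
  show ?thesis
    using close[OF assms] close[OF assms(2,1)] by (simp add: mult.commute)
qed

lemma convergent_translation_quotients: "convergent (\<lambda>n. (F ^^ n) 0 / real n)"
proof -
  have "Cauchy (\<lambda>n. (F ^^ n) 0 / real n)"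
  proof (rule CauchyI)
    fix e :: real assume "0 < e"
    then obtain N :: nat where N: "2 / e < real N" using reals_Archimedean2 by blast
    then have "N \<ge> 1" using \<open>0 < e\<close> by (cases N) (simp_all add: field_simps)
    have "2 / real N < e" using N \<open>0 < e\<close> \<open>N \<ge> 1\<close> by (simp add: field_simps)
    have "\<bar>(F ^^ m) 0 / real m - (F ^^ n) 0 / real n\<bar> < e" if "N \<le> m" "N \<le> n" for m n
    proof -
      have "1 / real m + 1 / real n \<le> 1 / real N + 1 / real N"
        using that \<open>N \<ge> 1\<close> by (intro add_mono divide_left_mono) auto
      then show ?thesis
        using translation_quotients_close[of m n] that \<open>N \<ge> 1\<close> \<open>2 / real N < e\<close> by simp
    qed
    then show "\<exists>M. \<forall>m\<ge>M. \<forall>n\<ge>M. norm ((F ^^ m) 0 / real m - (F ^^ n) 0 / real n) < e"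
      by auto
  qed
  then show ?thesis by (simp add: Cauchy_convergent_iff)
qed

lemma translation_quotients_tendsto:
  "(\<lambda>n. (F ^^ n) 0 / real n) \<longlonglongrightarrow> translation_number F"
  using convergent_translation_quotients
  unfolding translation_number_def by (simp add: convergent_LIMSEQ_iff)

lemma translation_number_le:
  assumes "k > 0" and bound: "\<And>t. (F ^^ k) t \<le> t + c"
  shows "translation_number F \<le> c / real k"
proof -
  have iterate: "(F ^^ (k * n)) 0 \<le> real n * c" for n
  proof (induction n)
    case (Suc n)
    have "(F ^^ (k * Suc n)) 0 = (F ^^ k) ((F ^^ (k * n)) 0)"
      by (simp add: funpow_add)
    also have "\<dots> \<le> (F ^^ (k * n)) 0 + c" by (rule bound)
    finally show ?case using Suc by (simp add: algebra_simps)
  qed simp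
  have "strict_mono (\<lambda>n. k * n)"
    using assms(1) by (simp add: strict_mono_def)
  from LIMSEQ_subseq_LIMSEQ[OF translation_quotients_tendsto this]
  have "(\<lambda>n. (F ^^ (k * n)) 0 / real (k * n)) \<longlonglongrightarrow> translation_number F"
    unfolding comp_def .
  moreover have "(F ^^ (k * n)) 0 / real (k * n) \<le> c / real k" if "n \<ge> 1" for n
    using iterate[of n] that assms(1) by (simp add: field_simps)
  ultimately show ?thesis
    by (intro LIMSEQ_le_const2) auto
qed

end

lemma translation_number_mono:
  assumes "degree_one_lift F" "degree_one_lift G" "\<And>t. F t \<le> G t"
  shows "translation_number F \<le> translation_number G"
proof -
  interpret F: degree_one_lift F by fact
  interpret G: degree_one_lift G by fact
  have "(F ^^ n) 0 \<le> (G ^^ n) 0" for n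
  proof (induction n)
    case (Suc n)
    have "F ((F ^^ n) 0) \<le> F ((G ^^ n) 0)" using Suc F.mono_lift by (rule monoD[rotated])
    also have "\<dots> \<le> G ((G ^^ n) 0)" by (rule assms(3))
    finally show ?case by simp
  qed simp
  then show ?thesis
    by (intro LIMSEQ_le[OF F.translation_quotients_tendsto G.translation_quotients_tendsto]
        exI[of _ 0] allI impI divide_right_mono) simp_all
qed

section \<open>Chords through a point of the disk\<close>

text \<open>The chord from z through p ends at z * circ (chord_angle z p). For z = 1 the chord to
  circ \<theta> has direction \<i> * cis (pi * \<theta>); equating its slope with that of p - 1 gives the
  arctangent formula.\<close>

definition chord_angle :: "complex \<Rightarrow> complex \<Rightarrow> real" where
  "chord_angle z p = 1/2 - arctan (Im (cnj z * p) / (1 - Re (cnj z * p))) / pi"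

lemma chord_angle_bounds: "0 < chord_angle z p" "chord_angle z p < 1"
  using arctan_bounded[of "Im (cnj z * p) / (1 - Re (cnj z * p))"] pi_gt_zero
  unfolding chord_angle_def by (auto simp: field_simps)

lemma sgn_cos:
  assumes "-(pi/2) < x" "x < 3*pi/2"
  shows "sgn (cos x) = sgn (pi/2 - x)"
proof -
  consider "x < pi/2" | "pi/2 < x" | "x = pi/2" by linarith
  then show ?thesis
  proof cases
    case 1
    then show ?thesis using assms cos_gt_zero_pi by simp
  next
    case 2
    then have "0 < cos (x - pi)" using assms by (intro cos_gt_zero_pi) auto
    then show ?thesis using 2 by (simp add: cos_diff)
  next
    case 3
    then show ?thesis by (simp only: cos_pi_half) simp
  qed
qed

lemma Im_chord_from_1:
  "Im (cnj (circ \<theta> - 1) * (q - 1)) =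
     2 * sin (pi*\<theta>) * (cos (pi*\<theta>) * (1 - Re q) - sin (pi*\<theta>) * Im q)"
proof -
  define x where "x = pi*\<theta>"
  have "circ \<theta> = cis (2*x)" by (simp add: circ_def x_def mult.assoc)
  then have "Im (cnj (circ \<theta> - 1) * (q - 1)) = (cos (2*x) - 1) * Im q - sin (2*x) * (Re q - 1)"
    by simp
  also have "\<dots> = ((cos x)\<^sup>2 - (sin x)\<^sup>2 - 1) * Im q - 2 * sin x * cos x * (Re q - 1)"
    by (simp only: cos_double sin_double)
  also have "\<dots> = 2 * sin x * (cos x * (1 - Re q) - sin x * Im q)"
    unfolding cos_squared_eq by (simp add: algebra_simps power2_eq_square)
  finally show ?thesis by (simp add: x_def)
qed

lemma sgn_Im_chord_from_1:
  assumes "norm q < 1" "0 < \<theta>" "\<theta> < 1"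
  shows "sgn (Im (cnj (circ \<theta> - 1) * (q - 1))) = sgn (chord_angle 1 q - \<theta>)"
proof -
  define d where "d = 1 - Re q"
  define \<alpha> where "\<alpha> = arctan (Im q / d)"
  have "d > 0" using assms(1) abs_Re_le_cmod[of q] unfolding d_def by linarith
  have \<alpha>: "-(pi/2) < \<alpha>" "\<alpha> < pi/2"
    unfolding \<alpha>_def using arctan_bounded by auto
  then have "cos \<alpha> > 0" by (rule cos_gt_zero_pi)
  have "Im q = d * tan \<alpha>" unfolding \<alpha>_def using \<open>d > 0\<close> by (simp add: tan_arctan)
  then have "cos (pi*\<theta>) * d - sin (pi*\<theta>) * Im q = (d / cos \<alpha>) * cos (pi*\<theta> + \<alpha>)"
    using \<open>cos \<alpha> > 0\<close> by (simp add: cos_add tan_def field_simps)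
  moreover define c where "c = 2 * sin (pi*\<theta>) * (d / cos \<alpha>)"
  ultimately have Im_eq: "Im (cnj (circ \<theta> - 1) * (q - 1)) = c * cos (pi*\<theta> + \<alpha>)"
    unfolding Im_chord_from_1 d_def by simp
  have "0 < pi*\<theta>" "pi*\<theta> < pi"
    using assms by (simp_all add: mult_less_cancel_left1)
  then have sgn_cos_eq: "sgn (cos (pi*\<theta> + \<alpha>)) = sgn (pi/2 - (pi*\<theta> + \<alpha>))"
    using \<alpha> by (intro sgn_cos) linarith+
  have "c > 0"
    using assms \<open>d > 0\<close> \<open>cos \<alpha> > 0\<close> by (simp add: c_def sin_gt_zero)
  have "sgn (Im (cnj (circ \<theta> - 1) * (q - 1))) = sgn c * sgn (cos (pi*\<theta> + \<alpha>))"
    unfolding Im_eq by (rule sgn_mult)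
  also have "\<dots> = sgn (pi/2 - (pi*\<theta> + \<alpha>))"
    using \<open>c > 0\<close> sgn_cos_eq by simp
  also have "pi/2 - (pi*\<theta> + \<alpha>) = pi * (chord_angle 1 q - \<theta>)"
    by (simp add: chord_angle_def \<alpha>_def d_def algebra_simps)
  finally show ?thesis by (simp add: sgn_mult)
qed

lemma sgn_Im_chord:
  assumes "norm z = 1" "norm p < 1" "0 < \<theta>" "\<theta> < 1"
  shows "sgn (Im (cnj (z * circ \<theta> - z) * (p - z))) = sgn (chord_angle z p - \<theta>)"
proof -
  have "cnj z * z = 1"
    using assms(1) complex_norm_square[of z] by (simp add: mult.commute)
  then have "cnj (z * circ \<theta> - z) * (p - z) = cnj (circ \<theta> - 1) * (cnj z * p - 1)"
    by (simp add: algebra_simps)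
  moreover have "chord_angle z p = chord_angle 1 (cnj z * p)" by (simp add: chord_angle_def)
  moreover have "norm (cnj z * p) < 1" using assms by (simp add: norm_mult)
  ultimately show ?thesis using sgn_Im_chord_from_1[OF _ assms(3,4)] by presburger
qed

lemma left_of_chord_iff:
  assumes "norm z = 1" "norm p < 1" "0 < \<theta>" "\<theta> < 1"
  shows "left_of z (z * circ \<theta>) p \<longleftrightarrow> \<theta> \<le> chord_angle z p"
  using sgn_Im_chord[OF assms] unfolding left_of_def sgn_real_def by (auto split: if_splits)

lemma line_through_iff:
  assumes "v \<noteq> w"
  shows "p \<in> line_through v w \<longleftrightarrow> Im (cnj (w - v) * (p - v)) = 0"
proof
  assume "p \<in> line_through v w"
  then obtain t where "p - v = of_real t * (w - v)" unfolding line_through_def by force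
  moreover have "Im (cnj a * (of_real t * a)) = 0" for a by (simp add: algebra_simps)
  ultimately show "Im (cnj (w - v) * (p - v)) = 0" by metis
next
  assume im: "Im (cnj (w - v) * (p - v)) = 0"
  define a where "a = w - v"
  have "a \<noteq> 0" using assms by (simp add: a_def)
  have "cnj a * (p - v) = of_real (Re (cnj a * (p - v)))"
    using im by (simp add: a_def complex_eq_iff)
  then have "of_real ((norm a)\<^sup>2) * (p - v) = of_real (Re (cnj a * (p - v))) * a"
    by (metis complex_norm_square mult.assoc mult.commute)
  then have "p - v = of_real (Re (cnj a * (p - v)) / (norm a)\<^sup>2) * a"
    using \<open>a \<noteq> 0\<close> by (simp add: field_simps)
  then obtain r where "p = v + of_real r * (w - v)"
    unfolding a_def by (metis add.commute diff_add_cancel)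
  then show "p \<in> line_through v w"
    unfolding line_through_def by blast
qed

lemma line_through_commute: "line_through v w = line_through w v"
proof -
  have "line_through a b \<subseteq> line_through b a" for a b
  proof
    fix p assume "p \<in> line_through a b"
    then obtain t where "p = a + of_real t * (b - a)" unfolding line_through_def by blast
    then have "p = b + of_real (1 - t) * (a - b)" by (simp add: algebra_simps)
    then show "p \<in> line_through b a" unfolding line_through_def by blast
  qed
  then show ?thesis by blast
qed

lemma on_chord_iff:
  assumes "norm z = 1" "norm p < 1" "0 < \<theta>" "\<theta> < 1"
  shows "p \<in> line_through z (z * circ \<theta>) \<longleftrightarrow> \<theta> = chord_angle z p"
proof -
  have "z * circ \<theta> \<noteq> z" using assms circ_ne_1 by auto
  then show ?thesis
    using sgn_Im_chord[OF assms] line_through_iff[of z "z * circ \<theta>" p]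
    unfolding sgn_real_def by (auto split: if_splits)
qed

lemma chord_angle_other_end:
  assumes "norm z = 1" "norm p < 1"
  shows "chord_angle (z * circ (chord_angle z p)) p = 1 - chord_angle z p"
proof -
  define \<theta> where "\<theta> = chord_angle z p"
  define w where "w = z * circ \<theta>"
  have \<theta>: "0 < \<theta>" "\<theta> < 1" using chord_angle_bounds unfolding \<theta>_def by auto
  have "w * circ (1 - \<theta>) = z" unfolding w_def
    by (simp add: mult.assoc flip: circ_add) (simp add: circ_eq_1_iff)
  moreover have "p \<in> line_through z w" using on_chord_iff[OF assms \<theta>] by (simp add: w_def \<theta>_def)
  ultimately have "p \<in> line_through w (w * circ (1 - \<theta>))" by (simp add: line_through_commute)
  moreover have "norm w = 1" using assms by (simp add: w_def norm_mult)
  ultimately show ?thesis using on_chord_iff[of w p "1 - \<theta>"] assms \<theta> by (simp add: w_def \<theta>_def)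
qed

lemma continuous_on_chord_angle:
  "continuous_on (sphere 0 1 \<times> ball 0 1) (\<lambda>x. chord_angle (fst x) (snd x))"
proof -
  have denom: "1 - Re (cnj (fst x) * snd x) \<noteq> 0" if "x \<in> sphere 0 1 \<times> ball 0 1" for x
  proof -
    have "norm (cnj (fst x) * snd x) < 1" using that by (auto simp: norm_mult)
    then show ?thesis using abs_Re_le_cmod[of "cnj (fst x) * snd x"] by linarith
  qed
  show ?thesis unfolding chord_angle_def
    by (intro continuous_intros ballI denom) simp_all
qed

definition chord_lift :: "complex \<Rightarrow> real \<Rightarrow> real" where
  "chord_lift p t = t + chord_angle (circ t) p"

lemma continuous_on_chord_lift:
  assumes "norm p < 1"
  shows "continuous_on UNIV (chord_lift p)"
proof -
  have "continuous_on UNIV (\<lambda>t. chord_angle (fst (circ t, p)) (snd (circ t, p)))"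
    by (rule continuous_on_compose2[OF continuous_on_chord_angle])
      (use assms in \<open>auto intro!: continuous_intros\<close>)
  then show ?thesis
    unfolding chord_lift_def by (auto intro!: continuous_intros)
qed

lemma chord_lift_plus_1: "chord_lift p (t + 1) = chord_lift p t + 1"
  by (simp add: chord_lift_def)

lemma chord_lift_chord_lift:
  assumes "norm p < 1"
  shows "chord_lift p (chord_lift p t) = t + 1"
proof -
  have "circ (chord_lift p t) = circ t * circ (chord_angle (circ t) p)"
    by (simp add: chord_lift_def circ_add)
  then have "chord_angle (circ (chord_lift p t)) p = 1 - chord_angle (circ t) p"
    using chord_angle_other_end[OF norm_circ assms] by simp
  then show ?thesis by (simp add: chord_lift_def)
qed

lemma strict_mono_chord_lift:
  assumes "norm p < 1"
  shows "strict_mono (chord_lift p)"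
proof (rule strict_monoI)
  fix a b :: real assume "a < b"
  \<comment> \<open>The involution makes the lift injective, and being of degree one rules out decreasing.\<close>
  have "inj (chord_lift p)"
    by (rule injI) (metis chord_lift_chord_lift[OF assms] add_right_cancel)
  then have "chord_lift p a < chord_lift p b \<and> chord_lift p b < chord_lift p (b + 1) \<or>
      chord_lift p (b + 1) < chord_lift p b \<and> chord_lift p b < chord_lift p a"
    using \<open>a < b\<close> continuous_on_chord_lift[OF assms]
    by (intro continuous_inj_imp_mono) (auto intro: inj_on_subset continuous_on_subset)
  then show "chord_lift p a < chord_lift p b"
    using chord_lift_plus_1[of p b] by auto
qed

section \<open>Tangent chords of a compact set\<close>

definition tangent_angle :: "complex set \<Rightarrow> complex \<Rightarrow> real" where
  "tangent_angle U z = Inf (chord_angle z ` U)"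

lemma bdd_below_chord_angle: "bdd_below (chord_angle z ` U)"
  by (rule bdd_belowI2[where m = 0]) (simp add: less_imp_le chord_angle_bounds)

lemma tangent_angle_le_chord_angle: "p \<in> U \<Longrightarrow> tangent_angle U z \<le> chord_angle z p"
  unfolding tangent_angle_def by (simp add: cInf_lower bdd_below_chord_angle)

lemma tangent_angle_antimono:
  "V \<subseteq> U \<Longrightarrow> V \<noteq> {} \<Longrightarrow> tangent_angle U z \<le> tangent_angle V z"
  unfolding tangent_angle_def by (simp add: cInf_superset_mono image_mono bdd_below_chord_angle)

definition tangent_lift :: "complex set \<Rightarrow> real \<Rightarrow> real" where
  "tangent_lift U t = t + tangent_angle U (circ t)"

lemma tangent_lift_plus_1: "tangent_lift U (t + 1) = tangent_lift U t + 1"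
  by (simp add: tangent_lift_def)

lemma tangent_lift_le_chord_lift: "p \<in> U \<Longrightarrow> tangent_lift U t \<le> chord_lift p t"
  by (simp add: tangent_lift_def chord_lift_def tangent_angle_le_chord_angle)

lemma tangent_lift_antimono: "V \<subseteq> U \<Longrightarrow> V \<noteq> {} \<Longrightarrow> tangent_lift U t \<le> tangent_lift V t"
  by (simp add: tangent_lift_def tangent_angle_antimono)

locale compact_in_disk =
  fixes U :: "complex set"
  assumes compact: "compact U" and nonempty: "U \<noteq> {}" and in_disk: "U \<subseteq> ball 0 1"
begin

lemma tangent_angle_attained:
  assumes "norm z = 1"
  obtains p where "p \<in> U" "tangent_angle U z = chord_angle z p"
proof -
  have "continuous_on U (\<lambda>p. chord_angle (fst (z, p)) (snd (z, p)))"
    by (rule continuous_on_compose2[OF continuous_on_chord_angle])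
      (use assms in_disk in \<open>auto intro!: continuous_intros\<close>)
  then obtain p where "p \<in> U" "\<forall>q\<in>U. chord_angle z p \<le> chord_angle z q"
    using continuous_attains_inf[OF compact nonempty] by auto
  then have "tangent_angle U z = chord_angle z p"
    unfolding tangent_angle_def by (intro cInf_eq_minimum) auto
  with \<open>p \<in> U\<close> show thesis by (rule that)
qed

lemma continuous_on_tangent_angle: "continuous_on (sphere 0 1) (tangent_angle U)"
  unfolding tangent_angle_def [abs_def]
  by (intro continuous_on_Inf_compact compact_sphere compact nonempty
      continuous_on_subset[OF continuous_on_chord_angle]) (use in_disk in auto)

lemma psi_eq:
  assumes "norm z = 1"
  shows "psi U z = z * circ (tangent_angle U z)"
  unfolding psi_def
proof (rule the_equality, intro conjI)
  define m where "m = tangent_angle U z"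
  obtain p0 where "p0 \<in> U" and p0: "m = chord_angle z p0"
    using tangent_angle_attained[OF assms] unfolding m_def by blast
  have m: "0 < m" "m < 1" using chord_angle_bounds p0 by auto
  have "norm p0 < 1" using \<open>p0 \<in> U\<close> in_disk by auto
  show "z * circ m \<in> sphere 0 1" using assms by (simp add: norm_mult)
  show "z * circ m \<noteq> z" using assms circ_ne_1[OF m] by auto
  show "line_through z (z * circ m) \<inter> U \<noteq> {}"
    using on_chord_iff[OF assms \<open>norm p0 < 1\<close> m] p0 \<open>p0 \<in> U\<close> by auto
  show "\<forall>p\<in>U. left_of z (z * circ m) p"
    using left_of_chord_iff[OF assms _ m] tangent_angle_le_chord_angle in_disk
    unfolding m_def by auto
  fix w assume w: "w \<in> sphere 0 1 \<and> w \<noteq> z \<and> line_through z w \<inter> U \<noteq> {} \<and> (\<forall>p\<in>U. left_of z w p)"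
  then obtain \<theta> where "0 \<le> \<theta>" "\<theta> < 1" and w_eq: "w = z * circ \<theta>"
    using sphere_eq_rotate_circ[OF assms] by auto
  moreover have "\<theta> \<noteq> 0" using w w_eq by (auto simp: circ_def)
  ultimately have \<theta>: "0 < \<theta>" "\<theta> < 1" by auto
  from w obtain p1 where "p1 \<in> U" "p1 \<in> line_through z w" by blast
  then have "\<theta> = chord_angle z p1"
    using on_chord_iff[OF assms _ \<theta>] in_disk w_eq by auto
  then have "m \<le> \<theta>"
    using tangent_angle_le_chord_angle[OF \<open>p1 \<in> U\<close>] unfolding m_def by simp
  moreover have "\<theta> \<le> m"
    using w \<open>p0 \<in> U\<close> left_of_chord_iff[OF assms \<open>norm p0 < 1\<close> \<theta>] p0 w_eq by auto
  ultimately show "w = z * circ m" using w_eq by simp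
qed

lemma psi_circ: "psi U (circ t) = circ (tangent_lift U t)"
  by (simp add: psi_eq tangent_lift_def circ_add)

lemma continuous_on_tangent_lift: "continuous_on UNIV (tangent_lift U)"
proof -
  have "continuous_on UNIV (\<lambda>t. tangent_angle U (circ t))"
    by (rule continuous_on_compose2[OF continuous_on_tangent_angle continuous_circ]) auto
  then show ?thesis
    unfolding tangent_lift_def by (intro continuous_intros)
qed

lemma tangent_lift_attained:
  obtains p where "p \<in> U" "tangent_lift U t = chord_lift p t"
  using tangent_angle_attained[OF norm_circ, of t]
  by (metis tangent_lift_def chord_lift_def)

lemma tangent_lift_bounds: "t < tangent_lift U t" "tangent_lift U t < t + 1"
  using tangent_lift_attained[of t] chord_angle_bounds
  by (metis add_less_cancel_left add.right_neutral chord_lift_def)+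

lemma strict_mono_tangent_lift: "strict_mono (tangent_lift U)"
proof (rule strict_monoI)
  fix a b :: real assume "a < b"
  obtain p where "p \<in> U" and p: "tangent_lift U b = chord_lift p b"
    using tangent_lift_attained .
  then have "norm p < 1" using in_disk by auto
  have "tangent_lift U a \<le> chord_lift p a"
    using \<open>p \<in> U\<close> by (rule tangent_lift_le_chord_lift)
  also have "\<dots> < chord_lift p b"
    using strict_mono_chord_lift[OF \<open>norm p < 1\<close>] \<open>a < b\<close> by (rule strict_monoD)
  finally show "tangent_lift U a < tangent_lift U b" by (simp add: p)
qed

lemma tangent_lift_twice_le: "tangent_lift U (tangent_lift U t) \<le> t + 1"
proof -
  obtain p where "p \<in> U" using nonempty by blast
  then have "norm p < 1" using in_disk by auto
  have "tangent_lift U (tangent_lift U t) \<le> chord_lift p (tangent_lift U t)"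
    using \<open>p \<in> U\<close> by (rule tangent_lift_le_chord_lift)
  also have "\<dots> \<le> chord_lift p (chord_lift p t)"
    using strict_mono_chord_lift[OF \<open>norm p < 1\<close>] tangent_lift_le_chord_lift[OF \<open>p \<in> U\<close>]
    by (simp add: strict_mono_less_eq)
  also have "\<dots> = t + 1"
    using \<open>norm p < 1\<close> by (rule chord_lift_chord_lift)
  finally show ?thesis .
qed

lemma lift_of_psi: "lift_of (psi U) = tangent_lift U"
  using continuous_on_tangent_lift psi_circ tangent_lift_bounds[of 0]
  by (intro lift_of_eqI) auto

lemma degree_one_lift_tangent_lift: "degree_one_lift (tangent_lift U)"
  by unfold_locales (simp_all add: strict_mono_mono strict_mono_tangent_lift tangent_lift_plus_1)

lemma orient_pres_homeo_psi: "orient_pres_homeo (psi U)"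
  by (rule orient_pres_homeoI[OF continuous_on_tangent_lift strict_mono_tangent_lift
        tangent_lift_plus_1 psi_circ])

lemma rot_num_psi_le_half: "rot_num (psi U) \<le> 1 / 2"
proof -
  have "(tangent_lift U ^^ 2) t \<le> t + 1" for t
    by (simp add: numeral_2_eq_2 tangent_lift_twice_le)
  then show ?thesis
    unfolding rot_num_eq_translation_number lift_of_psi
    using degree_one_lift.translation_number_le[OF degree_one_lift_tangent_lift, of 2 1] by simp
qed

end

lemma compact_in_disk_if_closed:
  "closed U \<Longrightarrow> U \<noteq> {} \<Longrightarrow> U \<subseteq> ball 0 1 \<Longrightarrow> compact_in_disk U"
  by unfold_locales (auto simp: compact_eq_bounded_closed intro: bounded_subset[OF bounded_ball])

lemma rot_num_psi_antimono:
  assumes "compact_in_disk U" "compact_in_disk V" "V \<subseteq> U"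
  shows "rot_num (psi U) \<le> rot_num (psi V)"
proof -
  interpret U: compact_in_disk U by fact
  interpret V: compact_in_disk V by fact
  show ?thesis
    unfolding rot_num_eq_translation_number U.lift_of_psi V.lift_of_psi
    using assms(3) V.nonempty
    by (intro translation_number_mono U.degree_one_lift_tangent_lift V.degree_one_lift_tangent_lift
        tangent_lift_antimono)
qed

theorem lemma2p6:
  fixes U :: "complex set"
  assumes "closed U" and "convex U" and "U \<noteq> {}" and "U \<subseteq> ball 0 1"
  shows "orient_pres_homeo (psi U) \<and>
         (\<forall>V. closed V \<and> convex V \<and> V \<noteq> {} \<and> V \<subseteq> U \<longrightarrow>
             rot_num (psi U) \<le> rot_num (psi V)) \<and>
         rot_num (psi U) \<le> 1 / 2"
proof -
  have U: "compact_in_disk U"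
    using assms by (intro compact_in_disk_if_closed)
  have "rot_num (psi U) \<le> rot_num (psi V)" if "closed V" "V \<noteq> {}" "V \<subseteq> U" for V
    using that assms(4) by (intro rot_num_psi_antimono U compact_in_disk_if_closed) auto
  then show ?thesis
    using compact_in_disk.orient_pres_homeo_psi[OF U] compact_in_disk.rot_num_psi_le_half[OF U]
    by blast
qed

end
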